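(* Let $A,B\in\mathfrak{J}_n$ be nonempty and let $x\in\mathbb{R}$ with $x\neq\frac12$. Let $\Omega_{A,B,x}=\{p\in\mathbb{R}^n: x\,d_S(p,A)+(1-x)\,d_S(p,B)=0\}$. Then $\mu(\Omega_{A,B,x})=0$.
   Context: $\mu$ is $n$-dimensional Lebesgue measure. $\operatorname{ci}(A)$ is the closure of the interior of $A$. $\mathfrak{J}_n$ is the family of bounded sets $A\subset\mathbb{R}^n$ with $A=\operatorname{ci}(A)$ and $\mu(\partial A)=0$. For nonempty bounded $A$, $d_S(p,A)=d(p,\partial A)$ if $p\in A$ and $d_S(p,A)=-d(p,\partial A)$ if $p\notin A$, with $d(q,E)=\min_{e\in E}\|q-e\|$. *)

theory Defs
  imports "HOL-Analysis.Analysis"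
begin

definition ci :: "'a::topological_space set \<Rightarrow> 'a set" where
  "ci A = closure (interior A)"

definition Jfam :: "'a::euclidean_space set set" where
  "Jfam = {A. bounded A \<and> A = ci A \<and> frontier A \<in> null_sets lebesgue}"

definition dS :: "'a::euclidean_space \<Rightarrow> 'a set \<Rightarrow> real" where
  "dS p A = (if p \<in> A then infdist p (frontier A) else - infdist p (frontier A))"

end

theory Submission
  imports Defs
begin

(* Let f p = x * dS p A + (1 - x) * dS p B with x \<noteq> 1/2, so the two coefficients have
   different absolute values.  Both signed distances are 1-Lipschitz, and from every point p
   off the frontier of A the function dS _ A changes at unit rate along the ray towards a
   nearest frontier point.  Hence at a zero p of f lying off both frontiers the term with the
   larger coefficient dominates: along that ray, and along every direction w close to it,
   f grows at least linearly, |f (p + t w)| \<ge> c t for small t \<ge> 0.  Choosing w from a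
   countable dense set, the zeros of f off the (null) frontiers are covered by countably many
   compact "escape pieces", each disjoint from its own small translates in a fixed direction,
   and a packing argument shows that such a set is Lebesgue-null. *)

lemma translates_disjoint:
  fixes E :: "'a::real_vector set"
  assumes avoid: "\<And>p t. p \<in> E \<Longrightarrow> 0 < t \<Longrightarrow> t \<le> \<delta> \<Longrightarrow> p + t *\<^sub>R w \<notin> E"
    and "s < s'" "s' - s \<le> \<delta>"
  shows "(+) (s *\<^sub>R w) ` E \<inter> (+) (s' *\<^sub>R w) ` E = {}"
proof -
  have False if "p \<in> E" "q \<in> E" "s *\<^sub>R w + p = s' *\<^sub>R w + q" for p q
  proof -
    have "p = q + (s' - s) *\<^sub>R w" using that(3) by (simp add: algebra_simps)
    thus False using avoid[OF that(2), of "s' - s"] assms(2,3) that(1) by simp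
  qed
  thus ?thesis by blast
qed

(* Packing argument: a compact set disjoint from its small translates in a fixed direction
   is null, since N pairwise disjoint translates of it fit into one fixed ball for every N. *)
lemma null_if_avoids_translates:
  fixes E :: "'a::euclidean_space set"
  assumes cE: "compact E" and \<delta>: "\<delta> > 0"
    and avoid: "\<And>p t. p \<in> E \<Longrightarrow> 0 < t \<Longrightarrow> t \<le> \<delta> \<Longrightarrow> p + t *\<^sub>R w \<notin> E"
  shows "E \<in> null_sets lebesgue"
proof -
  obtain R where "\<forall>p\<in>E. norm p \<le> R"
    using compact_imp_bounded[OF cE] bounded_iff by blast
  hence R: "E \<subseteq> cball 0 R" by auto
  have Em: "E \<in> lmeasurable" using lmeasurable_compact[OF cE] .
  define m where "m = measure lebesgue E"
  define C where "C = measure lebesgue (cball (0::'a) (R + \<delta> * norm w))"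
  have packing: "real N * m \<le> C" if N: "N \<ge> 1" for N :: nat
  proof -
    define s where "s i = real i * \<delta> / real N" for i :: nat
    define T where "T i = (+) (s i *\<^sub>R w) ` E" for i :: nat
    have Tm: "T i \<in> lmeasurable" for i unfolding T_def using measurable_translation[OF Em] .
    have s_range: "0 \<le> s i \<and> s i \<le> \<delta>" if "i \<in> {1..N}" for i
      using that \<delta> N by (simp add: s_def divide_le_eq)
    have disj: "disjoint_family_on T {1..N}"
    proof -
      have "T i \<inter> T j = {}" if "i \<in> {1..N}" "j \<in> {1..N}" "i < j" for i j
        unfolding T_def
      proof (rule translates_disjoint[OF avoid])
        show "s i < s j" using that N \<delta> by (simp add: s_def divide_strict_right_mono)
        show "s j - s i \<le> \<delta>" using s_range[OF that(1)] s_range[OF that(2)] by linarith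
      qed
      thus ?thesis unfolding disjoint_family_on_def by (metis Int_commute linorder_neqE_nat)
    qed
    have "measure lebesgue (\<Union>i\<in>{1..N}. T i) = (\<Sum>i\<in>{1..N}. measure lebesgue (T i))"
    proof (rule measure_finite_Union[OF _ _ disj])
      show "T ` {1..N} \<subseteq> sets lebesgue" using fmeasurableD[OF Tm] by blast
      show "emeasure lebesgue (T i) \<noteq> \<infinity>" for i using fmeasurableD2[OF Tm] by simp
    qed simp
    also have "\<dots> = real N * m" unfolding T_def m_def by (simp add: measure_translation)
    finally have "measure lebesgue (\<Union>i\<in>{1..N}. T i) = real N * m" .
    moreover have "(\<Union>i\<in>{1..N}. T i) \<subseteq> cball 0 (R + \<delta> * norm w)"
    proof
      fix y assume "y \<in> (\<Union>i\<in>{1..N}. T i)"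
      then obtain i p where i: "i \<in> {1..N}" and p: "p \<in> E" and y: "y = s i *\<^sub>R w + p"
        unfolding T_def by auto
      have "norm (s i *\<^sub>R w) \<le> \<delta> * norm w"
        using s_range[OF i] by (simp add: mult_right_mono)
      moreover have "norm p \<le> R" using R p by auto
      ultimately show "y \<in> cball 0 (R + \<delta> * norm w)"
        unfolding y using norm_triangle_ineq[of "s i *\<^sub>R w" p] by simp
    qed
    hence "measure lebesgue (\<Union>i\<in>{1..N}. T i) \<le> C"
      unfolding C_def by (rule measure_mono_fmeasurable) (use fmeasurableD[OF Tm] in auto)
    ultimately show ?thesis by simp
  qed
  have "m = 0"
  proof (rule ccontr)
    assume "m \<noteq> 0"
    hence m: "m > 0" unfolding m_def using measure_nonneg by (metis less_eq_real_def)
    obtain N :: nat where N: "C / m < real N" using reals_Archimedean2 by blast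
    have "0 \<le> C / m" unfolding C_def using m by simp
    hence "N \<ge> 1" using N by linarith
    moreover have "C < real N * m" using N m by (simp add: divide_less_eq)
    ultimately show False using packing by (meson not_le)
  qed
  thus ?thesis
    using Em unfolding m_def by (simp add: null_sets_def fmeasurableD emeasure_eq_measure2)
qed

definition escape_piece :: "('a::real_normed_vector \<Rightarrow> real) \<Rightarrow> nat \<Rightarrow> 'a \<Rightarrow> nat \<Rightarrow> 'a set"
  where "escape_piece f k w m = {p. f p = 0 \<and> norm p \<le> real m \<and>
           (\<forall>t\<in>{0..1 / real (Suc k)}. t / real (Suc k) \<le> \<bar>f (p + t *\<^sub>R w)\<bar>)}"

(* For continuous f an escape piece is compact and misses its small translates along w
   (f vanishes on the piece but not at p + t w), so it is null. *)
lemma escape_piece_null: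
  fixes f :: "'a::euclidean_space \<Rightarrow> real"
  assumes f: "continuous_on UNIV f"
  shows "escape_piece f k w m \<in> null_sets lebesgue"
proof (rule null_if_avoids_translates)
  let ?\<delta> = "1 / real (Suc k)"
  have "escape_piece f k w m = {p. f p = 0} \<inter> cball 0 (real m) \<inter>
      (\<Inter>t\<in>{0..?\<delta>}. {p. t / real (Suc k) \<le> \<bar>f (p + t *\<^sub>R w)\<bar>})"
    unfolding escape_piece_def by auto
  moreover have "closed {p. t / real (Suc k) \<le> \<bar>f (p + t *\<^sub>R w)\<bar>}" for t
  proof (rule closed_Collect_le[OF continuous_on_const])
    show "continuous_on UNIV (\<lambda>p. \<bar>f (p + t *\<^sub>R w)\<bar>)"
      by (intro continuous_intros continuous_on_compose2[OF f]) auto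
  qed
  moreover have "closed {p. f p = 0}" using closed_Collect_eq[OF f continuous_on_const] by simp
  ultimately have "closed (escape_piece f k w m)" by (simp add: closed_INT closed_Int)
  moreover have "bounded (escape_piece f k w m)"
    by (rule bounded_subset[of "cball 0 (real m)"]) (auto simp: escape_piece_def)
  ultimately show "compact (escape_piece f k w m)" by (simp add: compact_eq_bounded_closed)
  show "?\<delta> > 0" by simp
  fix p t assume p: "p \<in> escape_piece f k w m" and t: "0 < t" "t \<le> ?\<delta>"
  have "0 < t / real (Suc k)" using t by simp
  also have "\<dots> \<le> \<bar>f (p + t *\<^sub>R w)\<bar>" using p t unfolding escape_piece_def by auto
  finally show "p + t *\<^sub>R w \<notin> escape_piece f k w m" unfolding escape_piece_def by auto
qed

lemma null_zero_set_if_escaping: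
  fixes f :: "'a::euclidean_space \<Rightarrow> real"
  assumes f: "continuous_on UNIV f" and D: "countable D" and N: "N \<in> null_sets lebesgue"
    and escape: "\<And>p. f p = 0 \<Longrightarrow> p \<notin> N \<Longrightarrow>
      \<exists>w\<in>D. \<exists>c>0. \<exists>d>0. \<forall>t. 0 \<le> t \<longrightarrow> t \<le> d \<longrightarrow> c * t \<le> \<bar>f (p + t *\<^sub>R w)\<bar>"
  shows "{p. f p = 0} \<in> null_sets lebesgue"
proof (rule completion.complete2)
  let ?I = "(UNIV :: nat set) \<times> D \<times> (UNIV :: nat set)"
  show "{p. f p = 0} \<subseteq> N \<union> (\<Union>(k, w, m)\<in>?I. escape_piece f k w m)"
  proof
    fix p assume p: "p \<in> {p. f p = 0}"
    show "p \<in> N \<union> (\<Union>(k, w, m)\<in>?I. escape_piece f k w m)"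
    proof (cases "p \<in> N")
      case False
      then obtain w c d where w: "w \<in> D" and cd: "c > 0" "d > 0"
        and grow: "\<And>t. 0 \<le> t \<Longrightarrow> t \<le> d \<Longrightarrow> c * t \<le> \<bar>f (p + t *\<^sub>R w)\<bar>"
        using escape p by blast
      obtain k :: nat where k: "inverse (real (Suc k)) < min c d"
        using reals_Archimedean cd by (metis min_less_iff_conj)
      obtain m :: nat where m: "norm p \<le> real m" using real_arch_simple by blast
      have "t / real (Suc k) \<le> \<bar>f (p + t *\<^sub>R w)\<bar>" if t: "t \<in> {0..1 / real (Suc k)}" for t
      proof -
        have "t / real (Suc k) = inverse (real (Suc k)) * t" by (simp add: divide_inverse)
        also have "\<dots> \<le> c * t" using t k by (intro mult_right_mono) auto
        also have "\<dots> \<le> \<bar>f (p + t *\<^sub>R w)\<bar>" using grow t k by (simp add: inverse_eq_divide)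
        finally show ?thesis .
      qed
      hence "p \<in> escape_piece f k w m" using p m unfolding escape_piece_def by simp
      thus ?thesis using w by blast
    qed simp
  qed
  have "(\<Union>(k, w, m)\<in>?I. escape_piece f k w m) \<in> null_sets lebesgue"
    using D by (intro null_sets_UN') (auto intro: escape_piece_null[OF f])
  thus "N \<union> (\<Union>(k, w, m)\<in>?I. escape_piece f k w m) \<in> null_sets lebesgue"
    using N by (rule null_sets.Un[rotated])
qed

lemma abs_dS: "\<bar>dS p A\<bar> = infdist p (frontier A)"
  by (simp add: dS_def infdist_nonneg)

(* Across the frontier the signed distances add up to at most dist p q, because the segment
   from p to q meets the frontier. *)
lemma dS_lipschitz_across:
  fixes A :: "'a::euclidean_space set"
  assumes "p \<in> A" "q \<notin> A"
  shows "\<bar>dS p A - dS q A\<bar> \<le> dist p q"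
proof -
  have "closed_segment p q \<inter> frontier A \<noteq> {}"
    by (rule connected_Int_frontier) (use assms in auto)
  then obtain z where z: "z \<in> closed_segment p q" "z \<in> frontier A" by blast
  have "dist p q = dist p z + dist z q" using z(1) between between_mem_segment by blast
  moreover have "infdist p (frontier A) \<le> dist p z" "infdist q (frontier A) \<le> dist q z"
    using z(2) infdist_le by blast+
  ultimately show ?thesis
    using assms infdist_nonneg[of p] infdist_nonneg[of q] unfolding dS_def by (simp add: dist_commute)
qed

lemma dS_lipschitz:
  fixes A :: "'a::euclidean_space set"
  shows "\<bar>dS p A - dS q A\<bar> \<le> dist p q"
proof (cases "p \<in> A \<longleftrightarrow> q \<in> A")
  case True
  thus ?thesis using infdist_triangle_abs[of p "frontier A" q] unfolding dS_def
    by (auto simp: abs_minus_commute)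
next
  case False
  thus ?thesis using dS_lipschitz_across[of p A q] dS_lipschitz_across[of q A p]
    by (auto simp: abs_minus_commute dist_commute)
qed

lemma continuous_on_dS: "continuous_on UNIV (\<lambda>p. dS p (A::'a::euclidean_space set))"
proof (rule lipschitz_on_continuous_on[where L = 1], rule lipschitz_onI)
  show "dist (dS p A) (dS q A) \<le> 1 * dist p q" for p q :: 'a
    using dS_lipschitz[of p A q] by (simp add: dist_real_def)
qed simp

(* Moving from p (off the frontier) towards a nearest frontier point, the distance to the
   frontier drops at unit rate, so dS changes by at least the distance travelled. *)
lemma dS_unit_rate_ray:
  fixes A :: "'a::euclidean_space set"
  assumes F: "frontier A \<noteq> {}" and p: "p \<notin> frontier A"
  obtains u d where "norm u = 1" "d > 0"
    "\<And>t. 0 \<le> t \<Longrightarrow> t \<le> d \<Longrightarrow> t \<le> \<bar>dS (p + t *\<^sub>R u) A - dS p A\<bar>"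
proof -
  obtain z where z: "z \<in> frontier A" "infdist p (frontier A) = dist p z"
    using infdist_attains_inf[OF frontier_closed F] by blast
  define d where "d = dist p z"
  have d: "d > 0" unfolding d_def using z p by auto
  define u where "u = (1 / d) *\<^sub>R (z - p)"
  have u: "norm u = 1" unfolding u_def d_def using d by (simp add: d_def dist_norm norm_minus_commute)
  have "t \<le> \<bar>dS (p + t *\<^sub>R u) A - dS p A\<bar>" if t: "0 \<le> t" "t \<le> d" for t
  proof -
    have "z - (p + t *\<^sub>R u) = (1 - t / d) *\<^sub>R (z - p)"
      unfolding u_def using d by (simp add: algebra_simps)
    hence "dist (p + t *\<^sub>R u) z = \<bar>1 - t / d\<bar> * norm (z - p)"
      by (simp add: dist_norm norm_minus_commute[of "p + t *\<^sub>R u"])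
    also have "\<dots> = (1 - t / d) * d" using t d by (simp add: d_def dist_norm norm_minus_commute)
    also have "\<dots> = d - t" using d by (simp add: algebra_simps)
    finally have "\<bar>dS (p + t *\<^sub>R u) A\<bar> \<le> d - t" using abs_dS infdist_le[OF z(1)] by metis
    moreover have "\<bar>dS p A\<bar> = d" using abs_dS[of p A] z(2) d_def by simp
    ultimately show ?thesis by linarith
  qed
  thus ?thesis using that u d by blast
qed

(* A nonempty member of Jfam has a nonempty, null frontier: being bounded, it is not the
   whole space. *)
lemma Jfam_frontier:
  fixes A :: "'a::euclidean_space set"
  assumes "A \<in> Jfam" "A \<noteq> {}"
  shows "frontier A \<noteq> {}" "frontier A \<in> null_sets lebesgue"
proof -
  have "bounded A" "frontier A \<in> null_sets lebesgue" using assms(1) unfolding Jfam_def by auto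
  moreover have "A \<noteq> UNIV" using \<open>bounded A\<close> not_bounded_UNIV by blast
  ultimately show "frontier A \<noteq> {}" "frontier A \<in> null_sets lebesgue"
    using frontier_not_empty assms(2) by auto
qed

lemma lipschitz_combination_grows:
  fixes a b :: "'a::real_normed_vector \<Rightarrow> real"
  assumes La: "\<And>p q. \<bar>a p - a q\<bar> \<le> dist p q" and Lb: "\<And>p q. \<bar>b p - b q\<bar> \<le> dist p q"
    and f0: "\<alpha> * a p + \<beta> * b p = 0"
    and u: "norm u = 1" and ray: "t \<le> \<bar>a (p + t *\<^sub>R u) - a p\<bar>"
    and w: "(\<bar>\<alpha>\<bar> + \<bar>\<beta>\<bar>) * norm (w - u) \<le> (\<bar>\<alpha>\<bar> - \<bar>\<beta>\<bar>) / 2"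
    and t: "0 \<le> t"
  shows "(\<bar>\<alpha>\<bar> - \<bar>\<beta>\<bar>) / 2 * t \<le> \<bar>\<alpha> * a (p + t *\<^sub>R w) + \<beta> * b (p + t *\<^sub>R w)\<bar>"
proof -
  define g where "g q = \<alpha> * a q + \<beta> * b q" for q
  let ?y = "p + t *\<^sub>R u" and ?z = "p + t *\<^sub>R w"
  have "\<bar>b ?y - b p\<bar> \<le> t" using Lb[of ?y p] u t by (simp add: dist_norm)
  hence "\<bar>\<beta> * (b ?y - b p)\<bar> \<le> \<bar>\<beta>\<bar> * t" by (simp add: abs_mult mult_left_mono)
  moreover have "\<bar>\<alpha>\<bar> * t \<le> \<bar>\<alpha> * (a ?y - a p)\<bar>" using ray by (simp add: abs_mult mult_left_mono)
  moreover have "g ?y = \<alpha> * (a ?y - a p) + \<beta> * (b ?y - b p)"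
    using f0 unfolding g_def by (simp add: algebra_simps)
  ultimately have gy: "(\<bar>\<alpha>\<bar> - \<bar>\<beta>\<bar>) * t \<le> \<bar>g ?y\<bar>" by (simp add: left_diff_distrib)
  have "\<bar>g ?z - g ?y\<bar> \<le> \<bar>\<alpha>\<bar> * \<bar>a ?z - a ?y\<bar> + \<bar>\<beta>\<bar> * \<bar>b ?z - b ?y\<bar>"
    unfolding g_def by (simp add: abs_mult[symmetric] algebra_simps)
  also have "\<dots> \<le> (\<bar>\<alpha>\<bar> + \<bar>\<beta>\<bar>) * dist ?z ?y"
    using La[of ?z ?y] Lb[of ?z ?y] by (simp add: distrib_right add_mono mult_left_mono)
  also have "dist ?z ?y = t * norm (w - u)"
    using t by (simp add: dist_norm algebra_simps flip: scaleR_diff_right)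
  also have "(\<bar>\<alpha>\<bar> + \<bar>\<beta>\<bar>) * (t * norm (w - u)) \<le> (\<bar>\<alpha>\<bar> - \<bar>\<beta>\<bar>) / 2 * t"
    using mult_right_mono[OF w t] by (simp add: algebra_simps)
  finally show ?thesis using gy unfolding g_def by linarith
qed

(* At a zero p, off the frontier of A, of \<alpha> dS A + \<beta> b with b 1-Lipschitz and |\<beta>| < |\<alpha>|,
   the combination escapes linearly along some direction taken from any dense set D:
   perturb the unit-rate ray of dS A into D. *)
lemma dS_combination_escapes:
  fixes A :: "'a::euclidean_space set" and b :: "'a \<Rightarrow> real"
  assumes F: "frontier A \<noteq> {}" and p: "p \<notin> frontier A"
    and Lb: "\<And>p q. \<bar>b p - b q\<bar> \<le> dist p q" and ab: "\<bar>\<beta>\<bar> < \<bar>\<alpha>\<bar>"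
    and f0: "\<alpha> * dS p A + \<beta> * b p = 0"
    and D: "\<And>X. open X \<Longrightarrow> X \<noteq> {} \<Longrightarrow> \<exists>w\<in>D. w \<in> X"
  shows "\<exists>w\<in>D. \<exists>c>0. \<exists>d>0. \<forall>t. 0 \<le> t \<longrightarrow> t \<le> d \<longrightarrow>
           c * t \<le> \<bar>\<alpha> * dS (p + t *\<^sub>R w) A + \<beta> * b (p + t *\<^sub>R w)\<bar>"
proof -
  obtain u d where u: "norm u = 1" and d: "d > 0"
    and ray: "\<And>t. 0 \<le> t \<Longrightarrow> t \<le> d \<Longrightarrow> t \<le> \<bar>dS (p + t *\<^sub>R u) A - dS p A\<bar>"
    using dS_unit_rate_ray[OF F p] by blast
  define \<eta> where "\<eta> = (\<bar>\<alpha>\<bar> - \<bar>\<beta>\<bar>) / (2 * (\<bar>\<alpha>\<bar> + \<bar>\<beta>\<bar>))"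
  have "\<eta> > 0" unfolding \<eta>_def using ab by simp
  then obtain w where "w \<in> D" "w \<in> ball u \<eta>" using D[of "ball u \<eta>"] by auto
  hence "norm (w - u) \<le> \<eta>" by (simp add: dist_norm norm_minus_commute)
  hence w: "(\<bar>\<alpha>\<bar> + \<bar>\<beta>\<bar>) * norm (w - u) \<le> (\<bar>\<alpha>\<bar> - \<bar>\<beta>\<bar>) / 2"
    using ab unfolding \<eta>_def by (simp add: field_simps)
  have "\<forall>t. 0 \<le> t \<longrightarrow> t \<le> d \<longrightarrow>
      (\<bar>\<alpha>\<bar> - \<bar>\<beta>\<bar>) / 2 * t \<le> \<bar>\<alpha> * dS (p + t *\<^sub>R w) A + \<beta> * b (p + t *\<^sub>R w)\<bar>"
    using lipschitz_combination_grows[OF dS_lipschitz Lb f0 u ray w] by blast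
  moreover have "(\<bar>\<alpha>\<bar> - \<bar>\<beta>\<bar>) / 2 > 0" using ab by simp
  ultimately show ?thesis using \<open>w \<in> D\<close> d by blast
qed

theorem mainTheorem3:
  fixes A B :: "'a::euclidean_space set" and x :: real
  assumes "A \<in> Jfam" and "B \<in> Jfam" and "A \<noteq> {}" and "B \<noteq> {}"
    and "x \<noteq> 1/2"
  shows "{p. x * dS p A + (1 - x) * dS p B = 0} \<in> null_sets lebesgue"
proof -
  note FA = Jfam_frontier[OF assms(1,3)] and FB = Jfam_frontier[OF assms(2,4)]
  obtain D :: "'a set" where D: "countable D" "\<And>X. open X \<Longrightarrow> X \<noteq> {} \<Longrightarrow> \<exists>w\<in>D. w \<in> X"
    using countable_dense_setE by blast
  have coeffs: "\<bar>1 - x\<bar> < \<bar>x\<bar> \<or> \<bar>x\<bar> < \<bar>1 - x\<bar>"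
    using assms(5) by (auto simp: abs_if split: if_splits)
  show ?thesis
  proof (rule null_zero_set_if_escaping[OF _ D(1) null_sets.Un[OF FA(2) FB(2)]])
    show "continuous_on UNIV (\<lambda>p. x * dS p A + (1 - x) * dS p B)"
      by (intro continuous_intros continuous_on_dS)
    fix p assume f0: "x * dS p A + (1 - x) * dS p B = 0" and p: "p \<notin> frontier A \<union> frontier B"
    show "\<exists>w\<in>D. \<exists>c>0. \<exists>d>0. \<forall>t. 0 \<le> t \<longrightarrow> t \<le> d \<longrightarrow>
            c * t \<le> \<bar>x * dS (p + t *\<^sub>R w) A + (1 - x) * dS (p + t *\<^sub>R w) B\<bar>"
      using coeffs
    proof
      assume "\<bar>1 - x\<bar> < \<bar>x\<bar>"
      thus ?thesis using dS_combination_escapes[OF FA(1) _ dS_lipschitz _ f0 D(2)] p by blast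
    next
      assume "\<bar>x\<bar> < \<bar>1 - x\<bar>"
      moreover have "(1 - x) * dS p B + x * dS p A = 0" using f0 by simp
      ultimately show ?thesis
        using dS_combination_escapes[OF FB(1) _ dS_lipschitz, of p x "1 - x"] p D(2)
        by (simp add: add.commute)
    qed
  qed
qed

end
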